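(* Let $\mathbb{F}$ be a field. The categories $\mathbf{Assoc}_1$ and $\mathbf{CAssoc}_1$ are action representable. More precisely, for every unitary associative algebra $X$ there is a natural isomorphism of functors $\mathbf{Assoc}^{\mathrm{op}}\to\mathbf{Set}$ $$\mathrm{SplExt}(-,U(X))\cong \mathrm{Hom}_{\mathbf{Assoc}}(-,U(X)),$$ and for every unitary commutative associative algebra $X$ there is a natural isomorphism of functors $\mathbf{CAssoc}^{\mathrm{op}}\to\mathbf{Set}$ $$\mathrm{SplExt}(-,U(X))\cong \mathrm{Hom}_{\mathbf{CAssoc}}(-,U(X));$$ that is, the actor of $X$ is (isomorphic to) $X$ itself.
   Context: All algebras are over a field $\mathbb{F}$. $\mathbf{Assoc}$ is the category of (not necessarily unitary) associative $\mathbb{F}$-algebras, $\mathbf{CAssoc}$ its full subcategory of commutative ones. For a variety $\mathcal{V}$ of non-associative algebras closed under adjoining an external unit, $\mathcal{V}_1$ denotes the category of algebras in $\mathcal{V}$ having a multiplicative unit, with unit-preserving algebra homomorphisms, and $U\colon\mathcal{V}_1\to\mathcal{V}$ is the forgetful functor. For objects $B,X$ of $\mathcal{V}$, a split extension of $B$ by $X$ is a diagram $X\xrightarrow{k}A\underset{\beta}{\overset{\alpha}{\rightleftarrows}}B$ in $\mathcal{V}$ with $\alpha\circ\beta=\mathrm{id}_B$ and $(X,k)$ a kernel of $\alpha$; $\mathrm{SplExt}(B,X)$ is the set of isomorphism classes of such split extensions, and $\mathrm{SplExt}(-,X)\colon\mathcal{V}^{\mathrm{op}}\to\mathbf{Set}$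 is the functor acting on morphisms $f\colon B'\to B$ by pullback along $f$. The category $\mathcal{V}_1$ is called action representable if for every object $X$ of $\mathcal{V}_1$ the functor $\mathrm{SplExt}(-,U(X))\colon\mathcal{V}^{\mathrm{op}}\to\mathbf{Set}$ is representable, i.e. naturally isomorphic to $\mathrm{Hom}_{\mathcal{V}}(-,T)$ for some object $T$ of $\mathcal{V}$ (called the actor of $X$). *)

theory Defs
  imports Main
begin

record ('k, 'a) alg =
  carrier :: "'a set"
  add :: "'a \<Rightarrow> 'a \<Rightarrow> 'a"
  zero :: "'a"
  smul :: "'k \<Rightarrow> 'a \<Rightarrow> 'a"
  mul :: "'a \<Rightarrow> 'a \<Rightarrow> 'a"

definition vec_space :: "('k::field, 'a) alg \<Rightarrow> bool" where
  "vec_space A \<longleftrightarrow>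
     zero A \<in> carrier A
   \<and> (\<forall>x\<in>carrier A. \<forall>y\<in>carrier A. add A x y \<in> carrier A)
   \<and> (\<forall>c. \<forall>x\<in>carrier A. smul A c x \<in> carrier A)
   \<and> (\<forall>x\<in>carrier A. \<forall>y\<in>carrier A. \<forall>z\<in>carrier A. add A (add A x y) z = add A x (add A y z))
   \<and> (\<forall>x\<in>carrier A. \<forall>y\<in>carrier A. add A x y = add A y x)
   \<and> (\<forall>x\<in>carrier A. add A (zero A) x = x)
   \<and> (\<forall>x\<in>carrier A. \<exists>y\<in>carrier A. add A x y = zero A)
   \<and> (\<forall>x\<in>carrier A. smul A 1 x = x)
   \<and> (\<forall>a b. \<forall>x\<in>carrier A. smul A a (smul A b x) = smul A (a * b) x)
   \<and> (\<forall>a. \<forall>x\<in>carrier A. \<forall>y\<in>carrier A. smul A a (add A x y) = add A (smul A a x) (smul A a y))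
   \<and> (\<forall>a b. \<forall>x\<in>carrier A. smul A (a + b) x = add A (smul A a x) (smul A b x))"

definition assoc_alg :: "('k::field, 'a) alg \<Rightarrow> bool" where
  "assoc_alg A \<longleftrightarrow> vec_space A
   \<and> (\<forall>x\<in>carrier A. \<forall>y\<in>carrier A. mul A x y \<in> carrier A)
   \<and> (\<forall>x\<in>carrier A. \<forall>y\<in>carrier A. \<forall>z\<in>carrier A. mul A (add A x y) z = add A (mul A x z) (mul A y z))
   \<and> (\<forall>x\<in>carrier A. \<forall>y\<in>carrier A. \<forall>z\<in>carrier A. mul A x (add A y z) = add A (mul A x y) (mul A x z))
   \<and> (\<forall>c. \<forall>x\<in>carrier A. \<forall>y\<in>carrier A. mul A (smul A c x) y = smul A c (mul A x y))
   \<and> (\<forall>c. \<forall>x\<in>carrier A. \<forall>y\<in>carrier A. mul A x (smul A c y) = smul A c (mul A x y))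
   \<and> (\<forall>x\<in>carrier A. \<forall>y\<in>carrier A. \<forall>z\<in>carrier A. mul A (mul A x y) z = mul A x (mul A y z))"

definition commutative :: "('k, 'a) alg \<Rightarrow> bool" where
  "commutative A \<longleftrightarrow> (\<forall>x\<in>carrier A. \<forall>y\<in>carrier A. mul A x y = mul A y x)"

text \<open>Membership in the variety: c = False gives Assoc, c = True gives CAssoc.\<close>
definition in_var :: "bool \<Rightarrow> ('k::field, 'a) alg \<Rightarrow> bool" where
  "in_var c A \<longleftrightarrow> assoc_alg A \<and> (c \<longrightarrow> commutative A)"

definition is_unit :: "('k, 'a) alg \<Rightarrow> 'a \<Rightarrow> bool" where
  "is_unit A u \<longleftrightarrow> u \<in> carrier A \<and> (\<forall>x\<in>carrier A. mul A u x = x \<and> mul A x u = x)"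

definition unital :: "('k, 'a) alg \<Rightarrow> bool" where
  "unital A \<longleftrightarrow> (\<exists>u. is_unit A u)"

definition one :: "('k, 'a) alg \<Rightarrow> 'a" where
  "one A = (THE u. is_unit A u)"

text \<open>Algebra homomorphisms (in the variety, i.e. not required to preserve units).\<close>
definition alg_hom :: "('k, 'a) alg \<Rightarrow> ('k, 'b) alg \<Rightarrow> ('a \<Rightarrow> 'b) \<Rightarrow> bool" where
  "alg_hom A B f \<longleftrightarrow> f ` carrier A \<subseteq> carrier B
   \<and> (\<forall>x\<in>carrier A. \<forall>y\<in>carrier A. f (add A x y) = add B (f x) (f y))
   \<and> (\<forall>c. \<forall>x\<in>carrier A. f (smul A c x) = smul B c (f x))
   \<and> (\<forall>x\<in>carrier A. \<forall>y\<in>carrier A. f (mul A x y) = mul B (f x) (f y))"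

text \<open>Split extension X --k--> A <=(alpha,beta)=> B in the variety; (X,k) is a kernel of alpha,
  i.e. k is injective with image the kernel of alpha.\<close>
definition split_ext :: "bool \<Rightarrow> ('k::field, 'b) alg \<Rightarrow> ('k, 'x) alg \<Rightarrow> ('k, 'a) alg
    \<Rightarrow> ('x \<Rightarrow> 'a) \<Rightarrow> ('a \<Rightarrow> 'b) \<Rightarrow> ('b \<Rightarrow> 'a) \<Rightarrow> bool" where
  "split_ext c B X A k \<alpha> \<beta> \<longleftrightarrow> in_var c A
   \<and> alg_hom X A k \<and> alg_hom A B \<alpha> \<and> alg_hom B A \<beta>
   \<and> (\<forall>b\<in>carrier B. \<alpha> (\<beta> b) = b)
   \<and> inj_on k (carrier X)
   \<and> k ` carrier X = {a \<in> carrier A. \<alpha> a = zero B}"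

definition split_ext_iso :: "('k, 'b) alg \<Rightarrow> ('k, 'x) alg
    \<Rightarrow> ('k, 'a) alg \<Rightarrow> ('x \<Rightarrow> 'a) \<Rightarrow> ('a \<Rightarrow> 'b) \<Rightarrow> ('b \<Rightarrow> 'a)
    \<Rightarrow> ('k, 'c) alg \<Rightarrow> ('x \<Rightarrow> 'c) \<Rightarrow> ('c \<Rightarrow> 'b) \<Rightarrow> ('b \<Rightarrow> 'c) \<Rightarrow> bool" where
  "split_ext_iso B X A k \<alpha> \<beta> A' k' \<alpha>' \<beta>' \<longleftrightarrow> (\<exists>g. alg_hom A A' g \<and> bij_betw g (carrier A) (carrier A')
     \<and> (\<forall>x\<in>carrier X. g (k x) = k' x)
     \<and> (\<forall>a\<in>carrier A. \<alpha>' (g a) = \<alpha> a)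
     \<and> (\<forall>b\<in>carrier B. g (\<beta> b) = \<beta>' b))"

text \<open>Morphism from a split extension of B' by X to a split extension of B by X lying over
  f : B' -> B and the identity of X (e.g. the canonical map from the pullback along f).\<close>
definition split_ext_mor :: "('k, 'c) alg \<Rightarrow> ('k, 'x) alg \<Rightarrow> ('c \<Rightarrow> 'b)
    \<Rightarrow> ('k, 'd) alg \<Rightarrow> ('x \<Rightarrow> 'd) \<Rightarrow> ('d \<Rightarrow> 'c) \<Rightarrow> ('c \<Rightarrow> 'd)
    \<Rightarrow> ('k, 'a) alg \<Rightarrow> ('x \<Rightarrow> 'a) \<Rightarrow> ('a \<Rightarrow> 'b) \<Rightarrow> ('b \<Rightarrow> 'a) \<Rightarrow> ('d \<Rightarrow> 'a) \<Rightarrow> bool" where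
  "split_ext_mor B' X f A' k' \<alpha>' \<beta>' A k \<alpha> \<beta> g \<longleftrightarrow> alg_hom A' A g
     \<and> (\<forall>x\<in>carrier X. g (k' x) = k x)
     \<and> (\<forall>a\<in>carrier A'. \<alpha> (g a) = f (\<alpha>' a))
     \<and> (\<forall>b\<in>carrier B'. g (\<beta>' b) = \<beta> (f b))"

text \<open>The component SplExt(B,U(X)) -> Hom(B,U(X)) of the natural isomorphism:
  b \<mapsto> k^{-1}(\<beta>(b) k(1_X)).\<close>
definition actor_map :: "('k, 'x) alg \<Rightarrow> ('k, 'a) alg \<Rightarrow> ('x \<Rightarrow> 'a) \<Rightarrow> ('b \<Rightarrow> 'a) \<Rightarrow> 'b \<Rightarrow> 'x" where
  "actor_map X A k \<beta> b = the_inv_into (carrier X) k (mul A (\<beta> b) (k (one X)))"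

end

theory Submission imports Defs begin

text \<open>
  In a split extension \<open>X \<rightarrow> A \<rightleftarrows> B\<close> with \<open>X\<close> unital, \<open>k(1\<^sub>X)\<close> is a central
  idempotent of \<open>A\<close>: \<open>X\<close> is an ideal, and its unit absorbs products with it from either side.
  Hence \<open>a \<mapsto> (k\<^sup>-\<^sup>1(a k(1\<^sub>X)), \<alpha> a)\<close> is an isomorphism \<open>A \<cong> X \<times> B\<close> of split extensions,
  carrying \<open>\<beta>\<close> to \<open>b \<mapsto> (\<phi> b, b)\<close> where \<open>\<phi> = actor_map\<close>. So split extensions of \<open>B\<close> by \<open>X\<close>
  are classified up to isomorphism by homomorphisms \<open>B \<rightarrow> X\<close>, each of which is realised by the
  product extension; naturality holds because morphisms of extensions commute with the
  projections onto \<open>X\<close>.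
\<close>

lemma vec_space_facts:
  assumes "vec_space A"
  shows vs_zero_closed [simp]: "zero A \<in> carrier A"
    and vs_add_closed [simp]: "\<And>x y. x \<in> carrier A \<Longrightarrow> y \<in> carrier A \<Longrightarrow> add A x y \<in> carrier A"
    and vs_smul_closed [simp]: "\<And>a x. x \<in> carrier A \<Longrightarrow> smul A a x \<in> carrier A"
    and vs_add_assoc: "\<And>x y z. x \<in> carrier A \<Longrightarrow> y \<in> carrier A \<Longrightarrow> z \<in> carrier A \<Longrightarrow>
      add A (add A x y) z = add A x (add A y z)"
    and vs_add_commute: "\<And>x y. x \<in> carrier A \<Longrightarrow> y \<in> carrier A \<Longrightarrow> add A x y = add A y x"
    and vs_add_zero_left [simp]: "\<And>x. x \<in> carrier A \<Longrightarrow> add A (zero A) x = x"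
    and vs_add_inverse: "\<And>x. x \<in> carrier A \<Longrightarrow> \<exists>y\<in>carrier A. add A x y = zero A"
    and vs_smul_one [simp]: "\<And>x. x \<in> carrier A \<Longrightarrow> smul A 1 x = x"
    and vs_smul_smul: "\<And>a b x. x \<in> carrier A \<Longrightarrow> smul A a (smul A b x) = smul A (a * b) x"
    and vs_smul_add_distrib: "\<And>a x y. x \<in> carrier A \<Longrightarrow> y \<in> carrier A \<Longrightarrow>
      smul A a (add A x y) = add A (smul A a x) (smul A a y)"
    and vs_add_smul_distrib: "\<And>a b x. x \<in> carrier A \<Longrightarrow> smul A (a + b) x = add A (smul A a x) (smul A b x)"
  using assms unfolding vec_space_def by auto

lemma vs_add_zero_right [simp]: "vec_space A \<Longrightarrow> x \<in> carrier A \<Longrightarrow> add A x (zero A) = x"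
  by (metis vs_add_zero_left vs_add_commute vs_zero_closed)

lemma vs_add_right_cancel:
  assumes A: "vec_space A" and x: "x \<in> carrier A" and y: "y \<in> carrier A" and z: "z \<in> carrier A"
    and eq: "add A x z = add A y z"
  shows "x = y"
proof -
  obtain w where w: "w \<in> carrier A" "add A z w = zero A" using vs_add_inverse[OF A z] by blast
  have "x = add A (add A x z) w" using A x z w by (simp add: vs_add_assoc)
  also have "\<dots> = y" using A y z w eq by (simp add: vs_add_assoc)
  finally show ?thesis .
qed

lemma vs_idempotent_eq_zero: "vec_space A \<Longrightarrow> z \<in> carrier A \<Longrightarrow> add A z z = z \<Longrightarrow> z = zero A"
  by (rule vs_add_right_cancel[of A z "zero A" z]) auto

lemma vs_smul_zero_left [simp]:
  assumes A: "vec_space A" and x: "x \<in> carrier A"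
  shows "smul A 0 x = zero A"
  using vs_add_smul_distrib[OF A x, of 0 0] by (intro vs_idempotent_eq_zero[OF A]) (use A x in simp_all)

lemma vs_smul_zero_right [simp]:
  assumes A: "vec_space A"
  shows "smul A a (zero A) = zero A"
  using vs_smul_add_distrib[OF A vs_zero_closed[OF A] vs_zero_closed[OF A], of a] A
  by (intro vs_idempotent_eq_zero[OF A]) simp_all

lemma vs_add_neg [simp]:
  assumes A: "vec_space A" and x: "x \<in> carrier A"
  shows "add A x (smul A (-1) x) = zero A"
  using vs_add_smul_distrib[OF A x, of 1 "-1"] A x by simp

lemma vs_eq_if_diff_zero:
  assumes A: "vec_space A" and x: "x \<in> carrier A" and y: "y \<in> carrier A"
    and diff: "add A x (smul A (-1) y) = zero A"
  shows "x = y"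
  using vs_add_right_cancel[OF A x y vs_smul_closed[OF A y, of "-1"]] diff A y by simp

lemma vs_add_diff_cancel:
  assumes A: "vec_space A" and x: "x \<in> carrier A" and y: "y \<in> carrier A"
  shows "add A x (add A y (smul A (-1) x)) = y"
  using A x y by (metis vs_add_assoc vs_add_commute vs_add_neg vs_add_zero_right vs_smul_closed)

lemma assoc_alg_vec_space: "assoc_alg A \<Longrightarrow> vec_space A"
  unfolding assoc_alg_def by blast

lemma assoc_alg_facts:
  assumes "assoc_alg A"
  shows assoc_mul_closed [simp]: "\<And>x y. x \<in> carrier A \<Longrightarrow> y \<in> carrier A \<Longrightarrow> mul A x y \<in> carrier A"
    and assoc_distrib_right: "\<And>x y z. x \<in> carrier A \<Longrightarrow> y \<in> carrier A \<Longrightarrow> z \<in> carrier A \<Longrightarrow>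
      mul A (add A x y) z = add A (mul A x z) (mul A y z)"
    and assoc_distrib_left: "\<And>x y z. x \<in> carrier A \<Longrightarrow> y \<in> carrier A \<Longrightarrow> z \<in> carrier A \<Longrightarrow>
      mul A x (add A y z) = add A (mul A x y) (mul A x z)"
    and assoc_smul_mul_left: "\<And>c x y. x \<in> carrier A \<Longrightarrow> y \<in> carrier A \<Longrightarrow>
      mul A (smul A c x) y = smul A c (mul A x y)"
    and assoc_smul_mul_right: "\<And>c x y. x \<in> carrier A \<Longrightarrow> y \<in> carrier A \<Longrightarrow>
      mul A x (smul A c y) = smul A c (mul A x y)"
    and assoc_mul_assoc: "\<And>x y z. x \<in> carrier A \<Longrightarrow> y \<in> carrier A \<Longrightarrow> z \<in> carrier A \<Longrightarrow>
      mul A (mul A x y) z = mul A x (mul A y z)"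
  using assms unfolding assoc_alg_def by auto

lemma assoc_mul_zero_left [simp]:
  assumes A: "assoc_alg A" and x: "x \<in> carrier A"
  shows "mul A (zero A) x = zero A"
  using assoc_distrib_right[OF A, of "zero A" "zero A" x] A x assoc_alg_vec_space[OF A]
  by (intro vs_idempotent_eq_zero) simp_all

lemma assoc_mul_zero_right [simp]:
  assumes A: "assoc_alg A" and x: "x \<in> carrier A"
  shows "mul A x (zero A) = zero A"
  using assoc_distrib_left[OF A, of x "zero A" "zero A"] A x assoc_alg_vec_space[OF A]
  by (intro vs_idempotent_eq_zero) simp_all

lemma alg_hom_facts:
  assumes "alg_hom A B f"
  shows alg_hom_closed [simp]: "\<And>x. x \<in> carrier A \<Longrightarrow> f x \<in> carrier B"
    and alg_hom_add: "\<And>x y. x \<in> carrier A \<Longrightarrow> y \<in> carrier A \<Longrightarrow> f (add A x y) = add B (f x) (f y)"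
    and alg_hom_smul: "\<And>c x. x \<in> carrier A \<Longrightarrow> f (smul A c x) = smul B c (f x)"
    and alg_hom_mul: "\<And>x y. x \<in> carrier A \<Longrightarrow> y \<in> carrier A \<Longrightarrow> f (mul A x y) = mul B (f x) (f y)"
  using assms unfolding alg_hom_def by auto

lemma alg_hom_zero:
  assumes A: "vec_space A" and B: "vec_space B" and f: "alg_hom A B f"
  shows "f (zero A) = zero B"
  using alg_hom_add[OF f vs_zero_closed[OF A] vs_zero_closed[OF A]] A B f
  by (intro vs_idempotent_eq_zero[OF B]) simp_all

lemma alg_hom_comp: "alg_hom A B f \<Longrightarrow> alg_hom B C g \<Longrightarrow> alg_hom A C (\<lambda>x. g (f x))"
  unfolding alg_hom_def by (auto simp: image_subset_iff)

lemma alg_hom_the_inv_into: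
  assumes f: "alg_hom A B f" and bij: "bij_betw f (carrier A) (carrier B)" and A: "assoc_alg A"
  shows "alg_hom B A (the_inv_into (carrier A) f)"
proof -
  let ?h = "the_inv_into (carrier A) f"
  have h_closed: "?h y \<in> carrier A" if "y \<in> carrier B" for y
    using bij that by (meson bij_betw_apply bij_betw_the_inv_into)
  have f_h: "f (?h y) = y" if "y \<in> carrier B" for y
    using bij that by (simp add: f_the_inv_into_f_bij_betw)
  have h_f: "?h (f x) = x" if "x \<in> carrier A" for x
    using bij that by (simp add: bij_betw_def the_inv_into_f_f)
  have V: "vec_space A" using assoc_alg_vec_space[OF A] .
  show ?thesis
    unfolding alg_hom_def
  proof (intro conjI ballI allI)
    fix x y assume "x \<in> carrier B" "y \<in> carrier B"
    then show "?h (add B x y) = add A (?h x) (?h y)" and "?h (mul B x y) = mul A (?h x) (?h y)"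
      using alg_hom_add[OF f] alg_hom_mul[OF f] h_closed f_h h_f[of "add A _ _"] h_f[of "mul A _ _"] A V
      by (metis assoc_mul_closed vs_add_closed)+
  next
    fix c x assume "x \<in> carrier B"
    then show "?h (smul B c x) = smul A c (?h x)"
      using alg_hom_smul[OF f] h_closed f_h h_f V by (metis vs_smul_closed)
  qed (use h_closed in blast)
qed

lemma alg_hom_inj_on:
  assumes A: "vec_space A" and B: "vec_space B" and f: "alg_hom A B f"
    and kernel: "\<And>a. a \<in> carrier A \<Longrightarrow> f a = zero B \<Longrightarrow> a = zero A"
  shows "inj_on f (carrier A)"
proof (rule inj_onI)
  fix a a' assume a: "a \<in> carrier A" and a': "a' \<in> carrier A" and eq: "f a = f a'"
  let ?d = "add A a (smul A (-1) a')"
  have "f ?d = add B (f a') (smul B (-1) (f a'))"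
    using a a' A eq by (simp add: alg_hom_add[OF f] alg_hom_smul[OF f])
  then have "?d = zero A" using kernel a a' A B f by simp
  then show "a = a'" by (rule vs_eq_if_diff_zero[OF A a a'])
qed

lemma one_is_unit: "unital A \<Longrightarrow> is_unit A (one A)"
  unfolding unital_def one_def is_unit_def by (rule theI') (metis)

definition prod_alg :: "('k, 'x) alg \<Rightarrow> ('k, 'b) alg \<Rightarrow> ('k, 'x \<times> 'b) alg" where
  "prod_alg X B = \<lparr>carrier = carrier X \<times> carrier B,
     add = (\<lambda>p q. (add X (fst p) (fst q), add B (snd p) (snd q))),
     zero = (zero X, zero B),
     smul = (\<lambda>a p. (smul X a (fst p), smul B a (snd p))),
     mul = (\<lambda>p q. (mul X (fst p) (fst q), mul B (snd p) (snd q)))\<rparr>"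

lemma prod_alg_simps [simp]:
  "carrier (prod_alg X B) = carrier X \<times> carrier B"
  "add (prod_alg X B) p q = (add X (fst p) (fst q), add B (snd p) (snd q))"
  "zero (prod_alg X B) = (zero X, zero B)"
  "smul (prod_alg X B) a p = (smul X a (fst p), smul B a (snd p))"
  "mul (prod_alg X B) p q = (mul X (fst p) (fst q), mul B (snd p) (snd q))"
  unfolding prod_alg_def by simp_all

lemma vec_space_prod_alg:
  assumes X: "vec_space X" and B: "vec_space B"
  shows "vec_space (prod_alg X B)"
proof -
  have "\<exists>q\<in>carrier X \<times> carrier B. (add X x (fst q), add B b (snd q)) = (zero X, zero B)"
    if "x \<in> carrier X" "b \<in> carrier B" for x b
    using vs_add_inverse[OF X that(1)] vs_add_inverse[OF B that(2)] by auto
  then show ?thesis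
    unfolding vec_space_def using X B
    by (auto simp: vs_add_assoc vs_smul_smul vs_smul_add_distrib vs_add_smul_distrib intro: vs_add_commute)
qed

lemma in_var_prod_alg: "in_var c X \<Longrightarrow> in_var c B \<Longrightarrow> in_var c (prod_alg X B)"
  unfolding in_var_def commutative_def assoc_alg_def[of "prod_alg X B"]
  using vec_space_prod_alg[OF assoc_alg_vec_space assoc_alg_vec_space]
  by (auto simp: assoc_distrib_right assoc_distrib_left assoc_smul_mul_left assoc_smul_mul_right
      assoc_mul_assoc)

lemma split_ext_iso_sym:
  assumes iso: "split_ext_iso B X A k \<alpha> \<beta> A' k' \<alpha>' \<beta>'" and A: "assoc_alg A"
    and k: "k ` carrier X \<subseteq> carrier A" and \<beta>: "\<beta> ` carrier B \<subseteq> carrier A"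
  shows "split_ext_iso B X A' k' \<alpha>' \<beta>' A k \<alpha> \<beta>"
proof -
  obtain g where g: "alg_hom A A' g" and bij: "bij_betw g (carrier A) (carrier A')"
    and gk: "\<forall>x\<in>carrier X. g (k x) = k' x" and g\<alpha>: "\<forall>a\<in>carrier A. \<alpha>' (g a) = \<alpha> a"
    and g\<beta>: "\<forall>b\<in>carrier B. g (\<beta> b) = \<beta>' b"
    using iso unfolding split_ext_iso_def by blast
  let ?h = "the_inv_into (carrier A) g"
  have h_g: "?h (g a) = a" if "a \<in> carrier A" for a
    using bij that by (simp add: bij_betw_def the_inv_into_f_f)
  have g_h: "g (?h a') = a'" if "a' \<in> carrier A'" for a'
    using bij that by (simp add: f_the_inv_into_f_bij_betw)
  have h_closed: "?h a' \<in> carrier A" if "a' \<in> carrier A'" for a'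
    using bij that by (meson bij_betw_apply bij_betw_the_inv_into)
  show ?thesis
    unfolding split_ext_iso_def
  proof (intro exI[of _ ?h] conjI ballI)
    show "alg_hom A' A ?h" by (rule alg_hom_the_inv_into[OF g bij A])
    show "bij_betw ?h (carrier A') (carrier A)" by (rule bij_betw_the_inv_into[OF bij])
    show "?h (k' x) = k x" if "x \<in> carrier X" for x
      using gk h_g k that by (metis image_subset_iff)
    show "\<alpha> (?h a') = \<alpha>' a'" if "a' \<in> carrier A'" for a'
      using g\<alpha> g_h h_closed that by metis
    show "?h (\<beta>' b) = \<beta> b" if "b \<in> carrier B" for b
      using g\<beta> h_g \<beta> that by (metis image_subset_iff)
  qed
qed

lemma split_ext_iso_trans:
  assumes "split_ext_iso B X A1 k1 \<alpha>1 \<beta>1 A2 k2 \<alpha>2 \<beta>2" and "split_ext_iso B X A2 k2 \<alpha>2 \<beta>2 A3 k3 \<alpha>3 \<beta>3"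
  shows "split_ext_iso B X A1 k1 \<alpha>1 \<beta>1 A3 k3 \<alpha>3 \<beta>3"
proof -
  obtain g where g: "alg_hom A1 A2 g" "bij_betw g (carrier A1) (carrier A2)"
    "\<forall>x\<in>carrier X. g (k1 x) = k2 x" "\<forall>a\<in>carrier A1. \<alpha>2 (g a) = \<alpha>1 a" "\<forall>b\<in>carrier B. g (\<beta>1 b) = \<beta>2 b"
    using assms(1) unfolding split_ext_iso_def by blast
  obtain h where h: "alg_hom A2 A3 h" "bij_betw h (carrier A2) (carrier A3)"
    "\<forall>x\<in>carrier X. h (k2 x) = k3 x" "\<forall>a\<in>carrier A2. \<alpha>3 (h a) = \<alpha>2 a" "\<forall>b\<in>carrier B. h (\<beta>2 b) = \<beta>3 b"
    using assms(2) unfolding split_ext_iso_def by blast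
  have "bij_betw (\<lambda>a. h (g a)) (carrier A1) (carrier A3)"
    using bij_betw_trans[OF g(2) h(2)] by (simp add: comp_def)
  then show ?thesis
    unfolding split_ext_iso_def using alg_hom_comp[OF g(1) h(1)] g h
    by (intro exI[of _ "\<lambda>a. h (g a)"]) (auto simp: bij_betw_apply)
qed

definition kernel_proj :: "('k, 'x) alg \<Rightarrow> ('k, 'a) alg \<Rightarrow> ('x \<Rightarrow> 'a) \<Rightarrow> 'a \<Rightarrow> 'x" where
  "kernel_proj X A k a = the_inv_into (carrier X) k (mul A a (k (one X)))"

lemma actor_map_eq_kernel_proj: "actor_map X A k \<beta> b = kernel_proj X A k (\<beta> b)"
  unfolding actor_map_def kernel_proj_def ..

locale unital_split_ext =
  fixes c :: bool and B :: "('k::field, 'b) alg" and X :: "('k, 'x) alg" and A :: "('k, 'a) alg"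
    and k :: "'x \<Rightarrow> 'a" and \<alpha> :: "'a \<Rightarrow> 'b" and \<beta> :: "'b \<Rightarrow> 'a"
  assumes split_ext: "split_ext c B X A k \<alpha> \<beta>"
    and assoc_B: "assoc_alg B" and assoc_X: "assoc_alg X" and unital_X: "unital X"
begin

lemma assoc_A: "assoc_alg A"
  using split_ext unfolding split_ext_def in_var_def by blast

lemma vec_space_A: "vec_space A" and vec_space_B: "vec_space B" and vec_space_X: "vec_space X"
  using assoc_A assoc_B assoc_X assoc_alg_vec_space by auto

lemmas [simp] = assoc_A assoc_B assoc_X vec_space_A vec_space_B vec_space_X

lemma hom_k: "alg_hom X A k" and hom_\<alpha>: "alg_hom A B \<alpha>" and hom_\<beta>: "alg_hom B A \<beta>"
  and \<alpha>_\<beta> [simp]: "\<And>b. b \<in> carrier B \<Longrightarrow> \<alpha> (\<beta> b) = b"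
  and inj_k: "inj_on k (carrier X)" and image_k: "k ` carrier X = {a \<in> carrier A. \<alpha> a = zero B}"
  using split_ext unfolding split_ext_def by auto

lemma k_closed [simp]: "x \<in> carrier X \<Longrightarrow> k x \<in> carrier A"
  and \<alpha>_closed [simp]: "a \<in> carrier A \<Longrightarrow> \<alpha> a \<in> carrier B"
  and \<beta>_closed [simp]: "b \<in> carrier B \<Longrightarrow> \<beta> b \<in> carrier A"
  using hom_k hom_\<alpha> hom_\<beta> by auto

lemma \<alpha>_k [simp]: "x \<in> carrier X \<Longrightarrow> \<alpha> (k x) = zero B"
  using image_k by auto

lemma k_zero [simp]: "k (zero X) = zero A"
  using alg_hom_zero[OF vec_space_X vec_space_A hom_k] .

lemma k_inverse [simp]: "x \<in> carrier X \<Longrightarrow> the_inv_into (carrier X) k (k x) = x"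
  using inj_k by (simp add: the_inv_into_f_f)

lemma k_eq_iff [simp]: "x \<in> carrier X \<Longrightarrow> y \<in> carrier X \<Longrightarrow> k x = k y \<longleftrightarrow> x = y"
  using inj_k by (auto simp: inj_on_def)

abbreviation e :: 'x where "e \<equiv> one X"

lemma e_closed [simp]: "e \<in> carrier X"
  and e_mul [simp]: "\<And>x. x \<in> carrier X \<Longrightarrow> mul X e x = x"
  and mul_e [simp]: "\<And>x. x \<in> carrier X \<Longrightarrow> mul X x e = x"
  using one_is_unit[OF unital_X] unfolding is_unit_def by auto

lemma kernel_of_\<alpha>: "a \<in> carrier A \<Longrightarrow> \<alpha> a = zero B \<Longrightarrow> \<exists>x\<in>carrier X. a = k x"
  using image_k by auto

lemma mul_k_e_in_image: "a \<in> carrier A \<Longrightarrow> \<exists>x\<in>carrier X. mul A a (k e) = k x"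
  and k_e_mul_in_image: "a \<in> carrier A \<Longrightarrow> \<exists>x\<in>carrier X. mul A (k e) a = k x"
  by (simp_all add: kernel_of_\<alpha> alg_hom_mul[OF hom_\<alpha>])

text \<open>Both products lie in the image of \<open>k\<close>, on which \<open>k(1\<^sub>X)\<close> acts as a two-sided unit.\<close>
lemma k_e_central:
  assumes a: "a \<in> carrier A"
  shows "mul A a (k e) = mul A (k e) a"
proof -
  obtain y where y: "y \<in> carrier X" "mul A a (k e) = k y" using mul_k_e_in_image[OF a] by blast
  obtain z where z: "z \<in> carrier X" "mul A (k e) a = k z" using k_e_mul_in_image[OF a] by blast
  have "k y = mul A (k e) (mul A a (k e))"
    using y by (simp add: alg_hom_mul[OF hom_k, symmetric])
  also have "\<dots> = mul A (mul A (k e) a) (k e)"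
    using a by (simp add: assoc_mul_assoc)
  also have "\<dots> = k z"
    using z by (simp add: alg_hom_mul[OF hom_k, symmetric])
  finally show ?thesis using y z by simp
qed

lemma kernel_proj_closed [simp]: "a \<in> carrier A \<Longrightarrow> kernel_proj X A k a \<in> carrier X"
  and k_kernel_proj: "a \<in> carrier A \<Longrightarrow> k (kernel_proj X A k a) = mul A a (k e)"
  using mul_k_e_in_image[of a] unfolding kernel_proj_def by auto

lemma kernel_proj_eqI: "a \<in> carrier A \<Longrightarrow> x \<in> carrier X \<Longrightarrow> mul A a (k e) = k x \<Longrightarrow> kernel_proj X A k a = x"
  unfolding kernel_proj_def by simp

lemma kernel_proj_k [simp]: "x \<in> carrier X \<Longrightarrow> kernel_proj X A k (k x) = x"
  by (rule kernel_proj_eqI) (simp_all add: alg_hom_mul[OF hom_k, symmetric])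

lemma alg_hom_kernel_proj: "alg_hom A X (kernel_proj X A k)"
  unfolding alg_hom_def
proof (intro conjI ballI allI)
  fix a a' assume a: "a \<in> carrier A" and a': "a' \<in> carrier A"
  show "kernel_proj X A k (add A a a') = add X (kernel_proj X A k a) (kernel_proj X A k a')"
    using a a' by (intro kernel_proj_eqI) (simp_all add: alg_hom_add[OF hom_k] k_kernel_proj assoc_distrib_right)
  have "k (mul X (kernel_proj X A k a) (kernel_proj X A k a')) = mul A (mul A a (k e)) (mul A a' (k e))"
    using a a' by (simp add: alg_hom_mul[OF hom_k] k_kernel_proj)
  also have "\<dots> = mul A a (mul A (mul A (k e) a') (k e))"
    using a a' by (simp add: assoc_mul_assoc)
  also have "\<dots> = mul A a (mul A (mul A a' (k e)) (k e))"
    using a' by (simp add: k_e_central)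
  also have "\<dots> = mul A (mul A a a') (k e)"
    using a a' by (simp add: assoc_mul_assoc alg_hom_mul[OF hom_k, symmetric])
  finally show "kernel_proj X A k (mul A a a') = mul X (kernel_proj X A k a) (kernel_proj X A k a')"
    using a a' by (intro kernel_proj_eqI) simp_all
next
  fix c' a assume a: "a \<in> carrier A"
  then show "kernel_proj X A k (smul A c' a) = smul X c' (kernel_proj X A k a)"
    by (intro kernel_proj_eqI) (simp_all add: alg_hom_smul[OF hom_k] k_kernel_proj assoc_smul_mul_left)
qed auto

lemma alg_hom_actor_map: "alg_hom B X (actor_map X A k \<beta>)"
  unfolding actor_map_eq_kernel_proj using alg_hom_comp[OF hom_\<beta> alg_hom_kernel_proj] .

lemma kernel_proj_\<beta> [simp]: "b \<in> carrier B \<Longrightarrow> kernel_proj X A k (\<beta> b) = actor_map X A k \<beta> b"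
  by (simp add: actor_map_eq_kernel_proj)

lemma alg_hom_decomp: "alg_hom A (prod_alg X B) (\<lambda>a. (kernel_proj X A k a, \<alpha> a))"
  using alg_hom_kernel_proj hom_\<alpha> unfolding alg_hom_def by auto

lemma bij_betw_decomp: "bij_betw (\<lambda>a. (kernel_proj X A k a, \<alpha> a)) (carrier A) (carrier X \<times> carrier B)"
  unfolding bij_betw_def
proof
  show "inj_on (\<lambda>a. (kernel_proj X A k a, \<alpha> a)) (carrier A)"
  proof (rule alg_hom_inj_on[OF vec_space_A _ alg_hom_decomp])
    show "vec_space (prod_alg X B)" by (simp add: vec_space_prod_alg)
  next
    fix a assume a: "a \<in> carrier A" and "(kernel_proj X A k a, \<alpha> a) = zero (prod_alg X B)"
    then have "kernel_proj X A k a = zero X" and "\<alpha> a = zero B" by simp_all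
    then show "a = zero A" using kernel_of_\<alpha>[OF a] by auto
  qed
  show "(\<lambda>a. (kernel_proj X A k a, \<alpha> a)) ` carrier A = carrier X \<times> carrier B"
  proof (intro equalityI subsetI)
    fix p assume "p \<in> carrier X \<times> carrier B"
    then obtain x b where x: "x \<in> carrier X" and b: "b \<in> carrier B" and p: "p = (x, b)" by blast
    let ?\<phi> = "actor_map X A k \<beta> b"
    have \<phi>: "?\<phi> \<in> carrier X" using alg_hom_actor_map b by simp
    let ?a = "add A (\<beta> b) (k (add X x (smul X (-1) ?\<phi>)))"
    have a: "?a \<in> carrier A" using x b \<phi> by simp
    have "kernel_proj X A k ?a = add X ?\<phi> (add X x (smul X (-1) ?\<phi>))"
      using x b \<phi> by (simp add: alg_hom_add[OF alg_hom_kernel_proj])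
    also have "\<dots> = x" using vs_add_diff_cancel[OF vec_space_X \<phi> x] .
    finally have "(kernel_proj X A k ?a, \<alpha> ?a) = p"
      using x b \<phi> p by (simp add: alg_hom_add[OF hom_\<alpha>])
    then show "p \<in> (\<lambda>a. (kernel_proj X A k a, \<alpha> a)) ` carrier A" using a by blast
  qed auto
qed

lemma split_ext_iso_trivial:
  assumes \<phi>: "\<forall>b\<in>carrier B. \<phi> b = actor_map X A k \<beta> b"
  shows "split_ext_iso B X A k \<alpha> \<beta> (prod_alg X B) (\<lambda>x. (x, zero B)) snd (\<lambda>b. (\<phi> b, b))"
  unfolding split_ext_iso_def using alg_hom_decomp bij_betw_decomp \<phi>
  by (intro exI[of _ "\<lambda>a. (kernel_proj X A k a, \<alpha> a)"]) auto

lemma kernel_proj_comp: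
  assumes ext': "unital_split_ext c' B' X A' k' \<alpha>' \<beta>'" and g: "alg_hom A' A g"
    and g_k: "\<forall>x\<in>carrier X. g (k' x) = k x" and a': "a' \<in> carrier A'"
  shows "kernel_proj X A k (g a') = kernel_proj X A' k' a'"
proof -
  interpret ext': unital_split_ext c' B' X A' k' \<alpha>' \<beta>' by (rule ext')
  let ?x = "kernel_proj X A' k' a'"
  have "mul A (g a') (k e) = g (mul A' a' (k' e))"
    using a' g_k by (simp add: alg_hom_mul[OF g])
  also have "\<dots> = g (k' ?x)"
    using a' by (simp add: ext'.k_kernel_proj)
  also have "\<dots> = k ?x"
    using a' g_k by simp
  finally show ?thesis using a' g by (intro kernel_proj_eqI) simp_all
qed

lemma actor_map_natural:
  assumes ext': "unital_split_ext c' B' X A' k' \<alpha>' \<beta>'" and g: "alg_hom A' A g"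
    and g_k: "\<forall>x\<in>carrier X. g (k' x) = k x"
    and b: "b \<in> carrier B'" and g_\<beta>: "g (\<beta>' b) = \<beta> (f b)"
  shows "actor_map X A' k' \<beta>' b = actor_map X A k \<beta> (f b)"
proof -
  have "\<beta>' b \<in> carrier A'"
    using b unital_split_ext.\<beta>_closed[OF ext'] by blast
  then show ?thesis
    using kernel_proj_comp[OF ext' g g_k] g_\<beta> by (metis actor_map_eq_kernel_proj)
qed

lemma actor_map_eq_iff_split_ext_iso:
  assumes ext': "unital_split_ext c' B X A' k' \<alpha>' \<beta>'"
  shows "(\<forall>b\<in>carrier B. actor_map X A k \<beta> b = actor_map X A' k' \<beta>' b)
    \<longleftrightarrow> split_ext_iso B X A k \<alpha> \<beta> A' k' \<alpha>' \<beta>'"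
proof
  interpret ext': unital_split_ext c' B X A' k' \<alpha>' \<beta>' by (rule ext')
  let ?T = "prod_alg X B" and ?\<phi> = "actor_map X A k \<beta>"
  assume "\<forall>b\<in>carrier B. ?\<phi> b = actor_map X A' k' \<beta>' b"
  then have "split_ext_iso B X A' k' \<alpha>' \<beta>' ?T (\<lambda>x. (x, zero B)) snd (\<lambda>b. (?\<phi> b, b))"
    by (intro ext'.split_ext_iso_trivial) simp
  then have T_A': "split_ext_iso B X ?T (\<lambda>x. (x, zero B)) snd (\<lambda>b. (?\<phi> b, b)) A' k' \<alpha>' \<beta>'"
    by (rule split_ext_iso_sym[OF _ ext'.assoc_A]) auto
  have A_T: "split_ext_iso B X A k \<alpha> \<beta> ?T (\<lambda>x. (x, zero B)) snd (\<lambda>b. (?\<phi> b, b))"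
    by (intro split_ext_iso_trivial) simp
  show "split_ext_iso B X A k \<alpha> \<beta> A' k' \<alpha>' \<beta>'"
    by (rule split_ext_iso_trans[OF A_T T_A'])
next
  assume "split_ext_iso B X A k \<alpha> \<beta> A' k' \<alpha>' \<beta>'"
  then obtain g where g: "alg_hom A A' g" and g_k: "\<forall>x\<in>carrier X. g (k x) = k' x"
    and g_\<beta>: "\<forall>b\<in>carrier B. g (\<beta> b) = \<beta>' b"
    unfolding split_ext_iso_def by blast
  show "\<forall>b\<in>carrier B. actor_map X A k \<beta> b = actor_map X A' k' \<beta>' b"
    using unital_split_ext.actor_map_natural[OF ext' unital_split_ext_axioms g g_k, where f = "\<lambda>b. b"] g_\<beta>
    by simp
qed

end

lemma unital_split_extI:
  "in_var c B \<Longrightarrow> in_var c X \<Longrightarrow> unital X \<Longrightarrow> split_ext c B X A k \<alpha> \<beta> \<Longrightarrow> unital_split_ext c B X A k \<alpha> \<beta>"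
  unfolding in_var_def by unfold_locales blast+

lemma split_ext_trivial:
  assumes X: "in_var c X" and B: "in_var c B" and \<phi>: "alg_hom B X \<phi>"
  shows "split_ext c B X (prod_alg X B) (\<lambda>x. (x, zero B)) snd (\<lambda>b. (\<phi> b, b))"
proof -
  have "assoc_alg B" using B unfolding in_var_def by blast
  then have "vec_space B" by (rule assoc_alg_vec_space)
  then show ?thesis
    unfolding split_ext_def using in_var_prod_alg[OF X B] \<phi> \<open>assoc_alg B\<close>
    by (auto simp: alg_hom_def inj_on_def)
qed

lemma actor_map_trivial:
  assumes X: "unital X" and B: "assoc_alg B" and \<phi>: "alg_hom B X \<phi>" and b: "b \<in> carrier B"
  shows "actor_map X (prod_alg X B) (\<lambda>x. (x, zero B)) (\<lambda>b. (\<phi> b, b)) b = \<phi> b"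
proof -
  have "mul (prod_alg X B) (\<phi> b, b) (one X, zero B) = (\<phi> b, zero B)"
    using one_is_unit[OF X] B \<phi> b by (simp add: is_unit_def)
  moreover have "inj_on (\<lambda>x. (x, zero B)) (carrier X)" by (simp add: inj_on_def)
  then have "the_inv_into (carrier X) (\<lambda>x. (x, zero B)) (\<phi> b, zero B) = \<phi> b"
    using the_inv_into_f_f alg_hom_closed[OF \<phi> b] by fastforce
  ultimately show ?thesis unfolding actor_map_def by simp
qed

theorem theorem3p1:
  fixes X :: "('k::field, 'x) alg" and c :: bool
  assumes "in_var c X" and "unital X"
  shows
   "(\<forall>(B::('k,'b) alg) (A::('k,'a) alg) k \<alpha> \<beta>.
        in_var c B \<and> split_ext c B X A k \<alpha> \<beta> \<longrightarrow> alg_hom B X (actor_map X A k \<beta>))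
  \<and> (\<forall>(B::('k,'b) alg) (A1::('k,'a) alg) k1 \<alpha>1 \<beta>1 (A2::('k,'a2) alg) k2 \<alpha>2 \<beta>2.
        in_var c B \<and> split_ext c B X A1 k1 \<alpha>1 \<beta>1 \<and> split_ext c B X A2 k2 \<alpha>2 \<beta>2 \<longrightarrow>
        ((\<forall>b\<in>carrier B. actor_map X A1 k1 \<beta>1 b = actor_map X A2 k2 \<beta>2 b)
          \<longleftrightarrow> split_ext_iso B X A1 k1 \<alpha>1 \<beta>1 A2 k2 \<alpha>2 \<beta>2))
  \<and> (\<forall>(B::('k,'b) alg) \<phi>. in_var c B \<and> alg_hom B X \<phi> \<longrightarrow>
        (\<exists>(A::('k,'x \<times> 'b) alg) k \<alpha> \<beta>. split_ext c B X A k \<alpha> \<beta>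
            \<and> (\<forall>b\<in>carrier B. actor_map X A k \<beta> b = \<phi> b)))
  \<and> (\<forall>(B::('k,'b) alg) (B'::('k,'b2) alg) f (A::('k,'a) alg) k \<alpha> \<beta> (A'::('k,'a2) alg) k' \<alpha>' \<beta>' g.
        in_var c B \<and> in_var c B' \<and> alg_hom B' B f
        \<and> split_ext c B X A k \<alpha> \<beta> \<and> split_ext c B' X A' k' \<alpha>' \<beta>'
        \<and> split_ext_mor B' X f A' k' \<alpha>' \<beta>' A k \<alpha> \<beta> g \<longrightarrow>
        (\<forall>b\<in>carrier B'. actor_map X A' k' \<beta>' b = actor_map X A k \<beta> (f b)))"
proof (intro conjI allI impI)
  fix B :: "('k,'b) alg" and A :: "('k,'a) alg" and k \<alpha> \<beta>
  assume "in_var c B \<and> split_ext c B X A k \<alpha> \<beta>"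
  then interpret unital_split_ext c B X A k \<alpha> \<beta> using assms by (blast intro: unital_split_extI)
  show "alg_hom B X (actor_map X A k \<beta>)" by (rule alg_hom_actor_map)
next
  fix B :: "('k,'b) alg" and A1 :: "('k,'a) alg" and k1 \<alpha>1 \<beta>1 and A2 :: "('k,'a2) alg" and k2 \<alpha>2 \<beta>2
  assume ext: "in_var c B \<and> split_ext c B X A1 k1 \<alpha>1 \<beta>1 \<and> split_ext c B X A2 k2 \<alpha>2 \<beta>2"
  interpret E1: unital_split_ext c B X A1 k1 \<alpha>1 \<beta>1 using ext assms by (blast intro: unital_split_extI)
  show "(\<forall>b\<in>carrier B. actor_map X A1 k1 \<beta>1 b = actor_map X A2 k2 \<beta>2 b)
      \<longleftrightarrow> split_ext_iso B X A1 k1 \<alpha>1 \<beta>1 A2 k2 \<alpha>2 \<beta>2"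
    using ext assms by (intro E1.actor_map_eq_iff_split_ext_iso unital_split_extI) auto
next
  fix B :: "('k,'b) alg" and \<phi>
  assume "in_var c B \<and> alg_hom B X \<phi>"
  then have "split_ext c B X (prod_alg X B) (\<lambda>x. (x, zero B)) snd (\<lambda>b. (\<phi> b, b))"
    and "\<forall>b\<in>carrier B. actor_map X (prod_alg X B) (\<lambda>x. (x, zero B)) (\<lambda>b. (\<phi> b, b)) b = \<phi> b"
    using split_ext_trivial[OF assms(1)] actor_map_trivial[OF assms(2)] unfolding in_var_def by auto
  then show "\<exists>(A::('k,'x \<times> 'b) alg) k \<alpha> \<beta>. split_ext c B X A k \<alpha> \<beta> \<and> (\<forall>b\<in>carrier B. actor_map X A k \<beta> b = \<phi> b)"
    by blast
next
  fix B :: "('k,'b) alg" and B' :: "('k,'b2) alg" and f and A :: "('k,'a) alg" and k \<alpha> \<beta>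
    and A' :: "('k,'a2) alg" and k' \<alpha>' \<beta>' g
  assume ext: "in_var c B \<and> in_var c B' \<and> alg_hom B' B f
    \<and> split_ext c B X A k \<alpha> \<beta> \<and> split_ext c B' X A' k' \<alpha>' \<beta>'
    \<and> split_ext_mor B' X f A' k' \<alpha>' \<beta>' A k \<alpha> \<beta> g"
  have E: "unital_split_ext c B X A k \<alpha> \<beta>" and E': "unital_split_ext c B' X A' k' \<alpha>' \<beta>'"
    using ext assms by (blast intro: unital_split_extI)+
  have "alg_hom A' A g" "\<forall>x\<in>carrier X. g (k' x) = k x" "\<forall>b\<in>carrier B'. g (\<beta>' b) = \<beta> (f b)"
    using ext unfolding split_ext_mor_def by blast+
  then show "\<forall>b\<in>carrier B'. actor_map X A' k' \<beta>' b = actor_map X A k \<beta> (f b)"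
    using unital_split_ext.actor_map_natural[OF E E'] by blast
qed

end
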